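(* Let $n\geq 1$. There are infinitely many pairwise inequivalent $\mathbb{H}_{2n+1}$-structures on $\mathbb{P}V=\mathbb{P}^{2n+1}$ for which the central element $T$ fixes every point of the boundary and the induced $\mathbb{G}_a^{2n}$-structure on $\mathbb{P}\widetilde{V}$ is tautological. In particular, there are infinitely many pairwise inequivalent $\mathbb{H}_{2n+1}$-structures on $\mathbb{P}^{2n+1}$.
   Context: Work over $\mathbb{C}$. Let $\mathbb{W}$ be a $2n$-dimensional complex vector space with a non-degenerate skew-symmetric form $\omega$. The Heisenberg group $\mathbb{H}_{2n+1}$ is $\mathbb{W}\times\mathbb{C}$ with group law $(w_1,t_1)\cdot(w_2,t_2)=(w_1+w_2,\,t_1+t_2+\tfrac12\omega(w_1,w_2))$. Let $T=(0,1)$ and let $\mathbb{I}=\mathbb{C}T$ be its (one-dimensional) center; $\mathbb{H}_{2n+1}/\mathbb{I}\cong\mathbb{G}_a^{2n}$. Let $V\cong\mathbb{C}^{2n+2}$. An $\mathbb{H}_{2n+1}$-structure on $\mathbb{P}V$ is an effective algebraic action of $\mathbb{H}_{2n+1}$ on $\mathbb{P}V$ (generic stabilizer trivial) with a dense open orbit; the boundary (complement of the open orbit) is a hyperplane $\mathbb{P}V'$, $V'\subset V$ of dimension $2n+1$. Two actions $\alpha_i:G_i\times X_i\to X_i$ ($i=1,2$) are equivalent if there are a group isomorphism $\phi:G_1\to G_2$ and a variety isomorphism $\psi:X_1\to X_2$ with $\psi(\alpha_1(g,x))=\alpha_2(\phi(g),\psi(x))$ for all $g,x$. For a point $o$ of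 the open orbit, $\overline{\mathbb{I}\cdot o}$ is a projective line and $v$ denotes the point $\overline{\mathbb{I}\cdot o}\setminus\mathbb{I}\cdot o$; let $\hat v\in V$ represent $v$ and $\widetilde V=V/\mathbb{C}\hat v$. When $T$ fixes every point of $\mathbb{P}V'$, the action of $\mathbb{H}_{2n+1}$ descends (compatibly with the linear projection $\mathbb{P}V\dashrightarrow\mathbb{P}\widetilde V$) to an action of $\mathbb{H}_{2n+1}/\mathbb{I}\cong\mathbb{G}_a^{2n}$ on $\mathbb{P}\widetilde V\cong\mathbb{P}^{2n}$, called the induced $\mathbb{G}_a^{2n}$-structure. A $\mathbb{G}_a^{2n}$-structure on $\mathbb{P}^{2n}$ is tautological if (after identifying the group with $\mathbb{C}^{2n}$ and choosing homogeneous coordinates) it is $(a_1,\dots,a_{2n})\cdot[z_0,z_1,\dots,z_{2n}]=[z_0,z_1+a_1z_0,\dots,z_{2n}+a_{2n}z_0]$. *)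

theory Defs
  imports "HOL-Analysis.Analysis"
begin

text \<open>Any non-degenerate skew form
  is isomorphic to this one.\<close>

type_synonym 'n wsp = "(complex^'n::finite) \<times> (complex^'n)"
type_synonym 'n heis = "('n::finite) wsp \<times> complex"

definition wadd :: "('n::finite) wsp \<Rightarrow> ('n::finite) wsp \<Rightarrow> ('n::finite) wsp" where
  "wadd w1 w2 = (fst w1 + fst w2, snd w1 + snd w2)"

definition wscale :: "complex \<Rightarrow> ('n::finite) wsp \<Rightarrow> ('n::finite) wsp" where
  "wscale c w = (c *s fst w, c *s snd w)"

definition wzero :: "('n::finite) wsp" where
  "wzero = (0, 0)"

definition omega :: "('n::finite) wsp \<Rightarrow> ('n::finite) wsp \<Rightarrow> complex" where
  "omega w1 w2 = (\<Sum>i\<in>UNIV. fst w1 $ i * snd w2 $ i - snd w1 $ i * fst w2 $ i)"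

definition hmul :: "('n::finite) heis \<Rightarrow> ('n::finite) heis \<Rightarrow> ('n::finite) heis" where
  "hmul g h = (wadd (fst g) (fst h), snd g + snd h + omega (fst g) (fst h) / 2)"

definition hunit :: "('n::finite) heis" where
  "hunit = (wzero, 0)"

definition hT :: "('n::finite) heis" where
  "hT = (wzero, 1)"

inductive polyfn :: "('a \<Rightarrow> complex) set \<Rightarrow> ('a \<Rightarrow> complex) \<Rightarrow> bool" for C where
  coord: "c \<in> C \<Longrightarrow> polyfn C c"
| const: "polyfn C (\<lambda>_. a)"
| add: "polyfn C f \<Longrightarrow> polyfn C g \<Longrightarrow> polyfn C (\<lambda>x. f x + g x)"
| mult: "polyfn C f \<Longrightarrow> polyfn C g \<Longrightarrow> polyfn C (\<lambda>x. f x * g x)"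

definition heis_coords :: "(('n::finite) heis \<Rightarrow> complex) set" where
  "heis_coords = {(\<lambda>g. fst (fst g) $ i) | i. True} \<union> {(\<lambda>g. snd (fst g) $ i) | i. True} \<union> {snd}"

definition vec_coords :: "(complex^('v::finite) \<Rightarrow> complex) set" where
  "vec_coords = {(\<lambda>v. v $ i) | i. True}"

definition hom_poly :: "(complex^('v::finite) \<Rightarrow> complex) \<Rightarrow> bool" where
  "hom_poly f \<longleftrightarrow> polyfn vec_coords f \<and> (\<exists>d::nat. \<forall>c v. f (c *s v) = c ^ d * f v)"

definition line :: "complex^('v::finite) \<Rightarrow> (complex^('v::finite)) set" where
  "line v = {c *s v | c. True}"

definition proj_space :: "(complex^('v::finite)) set set" where
  "proj_space = {line v | v. v \<noteq> 0}"

definition zclosed :: "(complex^('v::finite)) set set \<Rightarrow> bool" where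
  "zclosed S \<longleftrightarrow> (\<exists>F. (\<forall>f\<in>F. hom_poly f) \<and>
      S = {line v | v. v \<noteq> 0 \<and> (\<forall>f\<in>F. f v = 0)})"

definition zopen :: "(complex^('v::finite)) set set \<Rightarrow> bool" where
  "zopen U \<longleftrightarrow> U \<subseteq> proj_space \<and> zclosed (proj_space - U)"

definition zclosure :: "(complex^('v::finite)) set set \<Rightarrow> (complex^('v::finite)) set set" where
  "zclosure S = \<Inter> {C. zclosed C \<and> S \<subseteq> C}"

definition zdense :: "(complex^('v::finite)) set set \<Rightarrow> bool" where
  "zdense S \<longleftrightarrow> zclosure S = proj_space"

type_synonym ('n, 'v) haction = "('n::finite) heis \<Rightarrow> (complex^('v::finite)) set \<Rightarrow> (complex^('v::finite)) set"

text \<open>Since H is an affine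
  space, every morphism H -> PGL(V) = Aut(P(V)) lifts to such a matrix family.\<close>
definition alg_action :: "('n::finite, 'v::finite) haction \<Rightarrow> bool" where
  "alg_action \<alpha> \<longleftrightarrow>
     (\<exists>\<rho> :: 'n heis \<Rightarrow> complex^('v::finite)^'v.
        (\<forall>i j. polyfn heis_coords (\<lambda>g. \<rho> g $ i $ j)) \<and>
        (\<forall>g. invertible (\<rho> g)) \<and>
        (\<forall>g v. v \<noteq> 0 \<longrightarrow> \<alpha> g (line v) = line (\<rho> g *v v))) \<and>
     (\<forall>x\<in>proj_space. \<alpha> hunit x = x) \<and>
     (\<forall>g h x. x \<in> proj_space \<longrightarrow> \<alpha> (hmul g h) x = \<alpha> g (\<alpha> h x))"

definition orbit :: "('n::finite, 'v::finite) haction \<Rightarrow> (complex^('v::finite)) set \<Rightarrow> (complex^('v::finite)) set set" where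
  "orbit \<alpha> x = range (\<lambda>g. \<alpha> g x)"

definition stab_trivial :: "('n::finite, 'v::finite) haction \<Rightarrow> (complex^('v::finite)) set \<Rightarrow> bool" where
  "stab_trivial \<alpha> x \<longleftrightarrow> (\<forall>g. \<alpha> g x = x \<longrightarrow> g = hunit)"

text \<open>H_{2n+1}-structure: effective algebraic action (generic stabilizer trivial, i.e.
  trivial on a nonempty Zariski open set) with a dense open orbit.\<close>
definition H_structure :: "('n::finite, 'v::finite) haction \<Rightarrow> bool" where
  "H_structure \<alpha> \<longleftrightarrow> alg_action \<alpha> \<and>
     (\<exists>U. zopen U \<and> U \<noteq> {} \<and> (\<forall>x\<in>U. stab_trivial \<alpha> x)) \<and>
     (\<exists>x0\<in>proj_space. zopen (orbit \<alpha> x0) \<and> zdense (orbit \<alpha> x0))"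

definition T_fixes_boundary :: "('n::finite, 'v::finite) haction \<Rightarrow> bool" where
  "T_fixes_boundary \<alpha> \<longleftrightarrow>
     (\<forall>x0\<in>proj_space. zopen (orbit \<alpha> x0) \<longrightarrow>
        (\<forall>x \<in> proj_space - orbit \<alpha> x0. \<alpha> hT x = x))"

definition clinear_W :: "(('n::finite) wsp \<Rightarrow> ('n::finite) wsp) \<Rightarrow> bool" where
  "clinear_W L \<longleftrightarrow> (\<forall>a b u w. L (wadd (wscale a u) (wscale b w)) = wadd (wscale a (L u)) (wscale b (L w)))"

definition clinear_VW :: "(complex^('v::finite) \<Rightarrow> complex \<times> ('n::finite) wsp) \<Rightarrow> bool" where
  "clinear_VW p \<longleftrightarrow> (\<forall>a b u w.
      p (a *s u + b *s w) = (a * fst (p u) + b * fst (p w), wadd (wscale a (snd (p u))) (wscale b (snd (p w)))))"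

text \<open>For o in the open orbit,
  the closure of I.o minus I.o is a single point v = [vh]; p : V -> C x W is a linear
  surjection with kernel C vh (i.e. homogeneous coordinates [z0, z] on P(V/C vh)),
  L : W -> W a linear identification of H/I = W with C^{2n}, and the action of
  g = (w,t) on P(V) covers [z0, z] |-> [z0, z + L(w) z0].\<close>
definition induced_tautological :: "('n::finite, 'v::finite) haction \<Rightarrow> bool" where
  "induced_tautological \<alpha> \<longleftrightarrow>
     (\<forall>x0\<in>proj_space. zopen (orbit \<alpha> x0) \<longrightarrow>
       (\<exists>vh. vh \<noteq> 0 \<and>
          zclosure (range (\<lambda>s. \<alpha> (wzero, s) x0)) - range (\<lambda>s. \<alpha> (wzero, s) x0) = {line vh} \<and>
          (\<exists>p L. clinear_VW p \<and> surj p \<and> (\<forall>u. p u = (0, wzero) \<longleftrightarrow> u \<in> line vh) \<and>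
                 clinear_W L \<and> bij L \<and>
                 (\<forall>w t u u'. u \<notin> line vh \<longrightarrow> \<alpha> (w, t) (line u) = line u' \<longrightarrow>
                     (\<exists>c. c \<noteq> 0 \<and> p u' = (c * fst (p u),
                          wscale c (wadd (snd (p u)) (wscale (fst (p u)) (L w)))))))))"

text \<open>Variety automorphisms of P(V) are exactly the projective linear transformations.\<close>
definition equiv_action :: "('n::finite, 'v::finite) haction \<Rightarrow> ('n::finite, 'v::finite) haction \<Rightarrow> bool" where
  "equiv_action \<alpha>1 \<alpha>2 \<longleftrightarrow>
     (\<exists>\<phi> P. bij \<phi> \<and> (\<forall>g h. \<phi> (hmul g h) = hmul (\<phi> g) (\<phi> h)) \<and>
        invertible (P :: complex^('v::finite)^'v) \<and>
        (\<forall>g x. x \<in> proj_space \<longrightarrow> (\<lambda>u. P *v u) ` (\<alpha>1 g x) = \<alpha>2 (\<phi> g) ((\<lambda>u. P *v u) ` x)))"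

end

theory Submission
  imports Defs
begin

text \<open>
  Write vectors of V as (z0, z, zc) with z in W.  For mu in C put
  B_mu = omega/2 + S_mu, where S_mu is a symmetric form of rank 2 supported on one symplectic
  coordinate plane of W, and q_mu(w, t) = t + S_mu(w, w)/2.  Then
  q_mu(g h) = q_mu(g) + q_mu(h) + B_mu(w_g, w_h), so
  (w, t) acting by (z0, z, zc) |-> (z0, z + z0 w, zc + z0 q_mu(w, t) + B_mu(w, z))
  is a unipotent representation of the Heisenberg group.  On P(V) the chart z0 <> 0 is a free,
  open and dense orbit, T fixes the hyperplane z0 = 0 pointwise, and the closure of a centre
  orbit is a projective line through the point [0 : 0 : 1], which gives the tautological induced
  structure.

  An equivalence between the actions for mu1 and mu2 is given by a matrix P which, the
  representations being unipotent, intertwines them exactly.  Then P fixes the line of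
  [0 : 0 : 1] and the hyperplane z0 = 0, and induces a linear substitution pi of W with
  B_mu2(pi w, pi z) = kappa B_mu1(w, z).  Its skew and symmetric parts say that pi rescales
  omega and S_mu by the same factor, and comparing them on the plane carrying S_mu gives
  mu1^2 = mu2^2.  The parameters mu = 2, 3, 4, ... therefore give infinitely many pairwise
  inequivalent structures.
\<close>

section \<open>Polynomial functions and the Zariski topology\<close>

lemma polyfn_diff:
  assumes "polyfn C f" "polyfn C g" shows "polyfn C (\<lambda>x. f x - g x)"
  using polyfn.add[OF assms(1) polyfn.mult[OF polyfn.const assms(2)], of "-1"] by simp

lemma polyfn_divide_const: "polyfn C f \<Longrightarrow> polyfn C (\<lambda>x. f x / c)"
  using polyfn.mult[OF _ polyfn.const, of C f "1 / c"] by simp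

lemma polyfn_sum:
  "finite I \<Longrightarrow> (\<And>i. i \<in> I \<Longrightarrow> polyfn C (h i)) \<Longrightarrow> polyfn C (\<lambda>x. \<Sum>i\<in>I. h i x)"
  by (induction I rule: finite_induct) (auto intro: polyfn.add polyfn.const[of C 0, simplified])

lemma continuous_on_polyfn_vec_coords: "polyfn vec_coords f \<Longrightarrow> continuous_on UNIV f"
  by (induction rule: polyfn.induct) (auto simp: vec_coords_def intro!: continuous_intros)

lemma hom_poly_component: "hom_poly (\<lambda>v. v $ k)"
  unfolding hom_poly_def by (auto intro!: polyfn.coord exI[of _ 1] simp: vec_coords_def)

lemma hom_poly_cross_diff: "hom_poly (\<lambda>v. v $ k * a - b * v $ l)"
proof -
  have "polyfn vec_coords (\<lambda>v. v $ k * a - b * v $ l)"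
    by (intro polyfn_diff polyfn.mult polyfn.const polyfn.coord) (auto simp: vec_coords_def)
  moreover have "(c *s v) $ k * a - b * (c *s v) $ l = c ^ 1 * (v $ k * a - b * v $ l)" for c v
    by (simp add: algebra_simps)
  ultimately show ?thesis unfolding hom_poly_def by blast
qed

lemma continuous_constant_off_point:
  fixes h :: "'a::perfect_space \<Rightarrow> 'b::t1_space"
  assumes "continuous_on UNIV h" and "\<And>x. x \<noteq> a \<Longrightarrow> h x = c"
  shows "h a = c"
  using continuous_constant_on_closure[of "- {a}" h c a] assms by (simp add: closure_complement)

lemma hom_poly_vanishes_at_limit:
  assumes "hom_poly f" and "\<And>e. e \<noteq> 0 \<Longrightarrow> f (u + e *s w) = 0"
  shows "f u = 0"
proof -
  have "(\<lambda>e::complex. u + e *s w) = (\<lambda>e. \<chi> k. u $ k + e * w $ k)"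
    by (simp add: vec_eq_iff fun_eq_iff)
  then have line_cont: "continuous_on UNIV (\<lambda>e::complex. u + e *s w)"
    by (simp only:) (intro continuous_intros)
  have "continuous_on UNIV (\<lambda>e. f (u + e *s w))"
    by (rule continuous_on_compose2[OF _ line_cont])
      (use assms(1) continuous_on_polyfn_vec_coords in \<open>auto simp: hom_poly_def\<close>)
  from continuous_constant_off_point[OF this, of 0 0] assms(2) show ?thesis by simp
qed

lemma mem_line: "x \<in> line v \<longleftrightarrow> (\<exists>c. x = c *s v)"
  by (auto simp: line_def)

lemma line_self: "v \<in> line v"
  unfolding mem_line by (rule exI[of _ 1]) simp

lemma line_smult:
  assumes "c \<noteq> 0" shows "line (c *s v) = line v"
proof (rule set_eqI)
  fix x show "x \<in> line (c *s v) \<longleftrightarrow> x \<in> line v"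
    unfolding mem_line
  proof
    assume "\<exists>d. x = d *s (c *s v)"
    then show "\<exists>d. x = d *s v" by (auto simp: vector_smult_assoc)
  next
    assume "\<exists>d. x = d *s v"
    then obtain d where "x = d *s v" by blast
    then have "x = (d / c) *s (c *s v)"
      using assms by (simp add: vector_smult_assoc)
    then show "\<exists>d. x = d *s (c *s v)" by blast
  qed
qed

lemma line_eq_iff: "v \<noteq> 0 \<Longrightarrow> line u = line v \<longleftrightarrow> (\<exists>c. c \<noteq> 0 \<and> u = c *s v)"
proof
  assume "v \<noteq> 0" and eq: "line u = line v"
  have "u \<in> line v" using eq line_self[of u] by simp
  then obtain c where c: "u = c *s v" unfolding mem_line by blast
  moreover have "c \<noteq> 0"
  proof
    assume "c = 0"
    then have "line v = {0}" using eq c by (simp add: line_def)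
    then show False using \<open>v \<noteq> 0\<close> line_self[of v] by blast
  qed
  ultimately show "\<exists>c. c \<noteq> 0 \<and> u = c *s v" by blast
qed (auto simp: line_smult)

lemma line_image:
  assumes "\<And>c v. F (c *s v) = c *s F v"
  shows "F ` line v = line (F v)"
proof
  show "F ` line v \<subseteq> line (F v)" using assms by (auto simp: line_def)
  show "line (F v) \<subseteq> F ` line v"
  proof
    fix x assume "x \<in> line (F v)"
    then obtain c where "x = F (c *s v)" using assms by (auto simp: mem_line)
    then show "x \<in> F ` line v" by (auto simp: mem_line)
  qed
qed

lemma line_in_proj_space: "v \<noteq> 0 \<Longrightarrow> line v \<in> proj_space"
  by (auto simp: proj_space_def)

definition zero_locus :: "(complex^'v::finite \<Rightarrow> complex) set \<Rightarrow> (complex^'v) set set" where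
  "zero_locus F = {line v | v. v \<noteq> 0 \<and> (\<forall>f\<in>F. f v = 0)}"

lemma zclosed_iff_zero_locus: "zclosed C \<longleftrightarrow> (\<exists>F. (\<forall>f\<in>F. hom_poly f) \<and> C = zero_locus F)"
  by (simp add: zclosed_def zero_locus_def)

lemma line_in_zero_locus_iff:
  assumes "\<And>f. f \<in> F \<Longrightarrow> hom_poly f" and "u \<noteq> 0"
  shows "line u \<in> zero_locus F \<longleftrightarrow> (\<forall>f\<in>F. f u = 0)"
proof
  assume "line u \<in> zero_locus F"
  then obtain v where v: "line u = line v" "v \<noteq> 0" "\<forall>f\<in>F. f v = 0"
    by (auto simp: zero_locus_def)
  then obtain c where u: "u = c *s v" using line_eq_iff by blast
  show "\<forall>f\<in>F. f u = 0"
  proof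
    fix f assume "f \<in> F"
    then obtain d where "\<forall>c v. f (c *s v) = c ^ d * f v"
      using assms(1) unfolding hom_poly_def by blast
    then show "f u = 0" using u v \<open>f \<in> F\<close> by simp
  qed
qed (use assms(2) in \<open>auto simp: zero_locus_def\<close>)

lemma zero_locus_empty: "zero_locus {} = proj_space"
  by (simp add: zero_locus_def proj_space_def)

lemma zclosed_proj_space: "zclosed proj_space"
  unfolding zclosed_iff_zero_locus zero_locus_empty[symmetric] by blast

lemma zclosure_unique:
  assumes "zclosed K" "S \<subseteq> K" "\<And>C. zclosed C \<Longrightarrow> S \<subseteq> C \<Longrightarrow> K \<subseteq> C"
  shows "zclosure S = K"
  using assms unfolding zclosure_def by blast

text \<open>Zariski closed sets are closed in the classical topology.\<close>
lemma zclosed_line_limit: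
  assumes "zclosed C" and "u \<noteq> 0"
    and "\<And>e. e \<noteq> 0 \<Longrightarrow> u + e *s w \<noteq> 0 \<and> line (u + e *s w) \<in> C"
  shows "line u \<in> C"
proof -
  obtain F where F: "\<And>f. f \<in> F \<Longrightarrow> hom_poly f" and C: "C = zero_locus F"
    using assms(1) by (auto simp: zclosed_iff_zero_locus)
  have "f u = 0" if "f \<in> F" for f
  proof (rule hom_poly_vanishes_at_limit[OF F[OF that]])
    fix e :: complex assume "e \<noteq> 0"
    with assms(3) have "u + e *s w \<noteq> 0" "line (u + e *s w) \<in> zero_locus F"
      by (auto simp: C)
    with line_in_zero_locus_iff[OF F] that show "f (u + e *s w) = 0" by blast
  qed
  with line_in_zero_locus_iff[OF F assms(2)] show ?thesis by (simp add: C)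
qed

lemma affine_line_nonzero:
  fixes u :: "complex^'v::finite"
  assumes "u $ k \<noteq> 0" "k \<noteq> l" shows "u + s *s axis l 1 \<noteq> 0"
proof
  assume "u + s *s axis l 1 = 0"
  then have "(u + s *s axis l 1) $ k = 0" by simp
  with assms show False by (simp add: axis_def)
qed

lemma minors_vanish_iff_on_projective_line:
  fixes u z :: "complex^'v::finite"
  assumes u: "u $ k \<noteq> 0" "k \<noteq> l" and z: "z \<noteq> 0"
  shows "(\<forall>j. j \<noteq> l \<longrightarrow> z $ j * u $ k = u $ j * z $ k) \<longleftrightarrow>
    line z = line (axis l 1) \<or> (\<exists>s. line z = line (u + s *s axis l 1))"
proof
  assume eqs: "\<forall>j. j \<noteq> l \<longrightarrow> z $ j * u $ k = u $ j * z $ k"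
  show "line z = line (axis l 1) \<or> (\<exists>s. line z = line (u + s *s axis l 1))"
  proof (cases "z $ k = 0")
    case True
    have "z $ j = 0" if "j \<noteq> l" for j
      using eqs that True u(1) by simp
    then have "z = z $ l *s axis l 1"
      by (simp add: vec_eq_iff axis_def)
    moreover from this z have "z $ l \<noteq> 0" by auto
    ultimately show ?thesis by (metis line_smult)
  next
    case False
    define c where "c = z $ k / u $ k"
    define s where "s = (z $ l - c * u $ l) / c"
    have "c \<noteq> 0" using False u by (simp add: c_def)
    have "z $ j = (c *s (u + s *s axis l 1)) $ j" for j
    proof (cases "j = l")
      case True
      then show ?thesis using \<open>c \<noteq> 0\<close> by (simp add: s_def axis_def field_simps)
    next
      case False
      then have "z $ j * u $ k = u $ j * z $ k" using eqs by blast
      then show ?thesis using False u(1) by (simp add: c_def axis_def field_simps)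
    qed
    then have "z = c *s (u + s *s axis l 1)" by (simp add: vec_eq_iff)
    then show ?thesis using line_smult[OF \<open>c \<noteq> 0\<close>] by blast
  qed
next
  have e: "axis l 1 \<noteq> (0 :: complex^'v)" by (simp add: axis_eq_0_iff)
  assume "line z = line (axis l 1) \<or> (\<exists>s. line z = line (u + s *s axis l 1))"
  then obtain c s where "z = c *s axis l 1 \<or> z = c *s (u + s *s axis l 1)"
    using line_eq_iff[OF e] line_eq_iff[OF affine_line_nonzero[OF u]] by blast
  then show "\<forall>j. j \<noteq> l \<longrightarrow> z $ j * u $ k = u $ j * z $ k"
    using u(2) by (auto simp: axis_def)
qed

lemma zero_locus_projective_line:
  fixes u :: "complex^'v::finite"
  assumes u: "u $ k \<noteq> 0" "k \<noteq> l"
  shows "zero_locus {\<lambda>z. z $ j * u $ k - u $ j * z $ k | j. j \<noteq> l} =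
    insert (line (axis l 1)) (range (\<lambda>s. line (u + s *s axis l 1)))"
  (is "zero_locus ?F = ?L")
proof -
  have F: "(\<forall>f\<in>?F. f z = 0) \<longleftrightarrow> (\<forall>j. j \<noteq> l \<longrightarrow> z $ j * u $ k = u $ j * z $ k)" for z
    by auto
  have "zero_locus ?F = {line z | z. z \<noteq> 0 \<and>
      (line z = line (axis l 1) \<or> (\<exists>s. line z = line (u + s *s axis l 1)))}"
    unfolding zero_locus_def F by (simp add: minors_vanish_iff_on_projective_line[OF u] cong: conj_cong)
  also have "\<dots> = ?L"
    using affine_line_nonzero[OF u] by (auto simp: axis_eq_0_iff)
  finally show ?thesis .
qed

lemma zclosure_affine_line:
  fixes u :: "complex^'v::finite"
  assumes u: "u $ k \<noteq> 0" "k \<noteq> l"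
  defines "R \<equiv> range (\<lambda>s. line (u + s *s axis l 1))"
  shows "zclosure R = insert (line (axis l 1)) R"
proof (rule zclosure_unique)
  have "\<forall>f \<in> {\<lambda>z. z $ j * u $ k - u $ j * z $ k | j. j \<noteq> l}. hom_poly f"
    using hom_poly_cross_diff by blast
  then show "zclosed (insert (line (axis l 1)) R)"
    unfolding R_def zero_locus_projective_line[OF u, symmetric] zclosed_iff_zero_locus by blast
  show "R \<subseteq> insert (line (axis l 1)) R" by blast
  fix C assume C: "zclosed C" "R \<subseteq> C"
  have "line (axis l 1) \<in> C"
  proof (rule zclosed_line_limit[OF C(1), where w = u])
    show "axis l 1 \<noteq> (0 :: complex^'v)" by (simp add: axis_eq_0_iff)
    fix t :: complex assume "t \<noteq> 0"
    then have eq: "axis l 1 + t *s u = t *s (u + (1 / t) *s axis l 1)"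
      by (simp add: vec_eq_iff algebra_simps)
    have "line (axis l 1 + t *s u) \<in> R"
      unfolding eq line_smult[OF \<open>t \<noteq> 0\<close>] R_def by (rule rangeI)
    moreover have "axis l 1 + t *s u \<noteq> 0"
      unfolding eq by (metis \<open>t \<noteq> 0\<close> affine_line_nonzero[OF u] vector_mul_eq_0)
    ultimately show "axis l 1 + t *s u \<noteq> 0 \<and> line (axis l 1 + t *s u) \<in> C"
      using C(2) by blast
  qed
  with C(2) show "insert (line (axis l 1)) R \<subseteq> C" by blast
qed

lemma axis_notin_affine_line:
  fixes u :: "complex^'v::finite"
  assumes u: "u $ k \<noteq> 0" "k \<noteq> l"
  shows "line (axis l 1) \<notin> range (\<lambda>s. line (u + s *s axis l 1))"
proof
  assume "line (axis l 1) \<in> range (\<lambda>s. line (u + s *s axis l 1))"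
  then obtain s where "line (axis l 1) = line (u + s *s axis l 1)" by blast
  then obtain c where "c \<noteq> 0" and eq: "axis l 1 = c *s (u + s *s axis l 1)"
    using line_eq_iff[OF affine_line_nonzero[OF u]] by blast
  from eq have "(axis l 1 :: complex^'v) $ k = (c *s (u + s *s axis l 1)) $ k"
    by (rule arg_cong)
  then show False using u \<open>c \<noteq> 0\<close> by (simp add: axis_def)
qed

section \<open>The symplectic space and the forms B_mu\<close>

lemma fst_wadd [simp]: "fst (wadd a b) = fst a + fst b"
  and snd_wadd [simp]: "snd (wadd a b) = snd a + snd b"
  and fst_wscale [simp]: "fst (wscale c a) = c *s fst a"
  and snd_wscale [simp]: "snd (wscale c a) = c *s snd a"
  and fst_wzero [simp]: "fst wzero = 0"
  and snd_wzero [simp]: "snd wzero = 0"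
  by (simp_all add: wadd_def wscale_def wzero_def)

lemma wscale_wzero [simp]: "wscale c wzero = wzero"
  by (simp add: wscale_def wzero_def)

lemma wadd_wzero [simp]: "wadd a wzero = a"
  by (simp add: wadd_def wzero_def)

lemma wsp_eqI: "(\<And>i. fst a $ i = fst b $ i) \<Longrightarrow> (\<And>i. snd a $ i = snd b $ i) \<Longrightarrow> a = b"
  by (simp add: prod_eq_iff vec_eq_iff)

lemma omega_wadd_left: "omega (wadd a b) c = omega a c + omega b c"
  and omega_wadd_right: "omega c (wadd a b) = omega c a + omega c b"
  and omega_wscale_left: "omega (wscale k a) b = k * omega a b"
  and omega_wscale_right: "omega a (wscale k b) = k * omega a b"
  by (simp_all add: omega_def algebra_simps sum.distrib sum_subtractf sum_distrib_left)

lemma omega_swap: "omega b a = - omega a b"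
  by (simp add: omega_def algebra_simps sum_subtractf)

lemma omega_self: "omega a a = 0"
  using omega_swap[of a a] by simp

lemma omega_wzero_left [simp]: "omega wzero a = 0"
  and omega_wzero_right [simp]: "omega a wzero = 0"
  by (simp_all add: omega_def)

lemma axis_nth_neq [simp]: "j \<noteq> i \<Longrightarrow> axis i x $ j = 0"
  by (simp add: axis_def)

lemma sum_axis_mult: "(\<Sum>k\<in>UNIV. axis i 1 $ k * g k) = (g i :: 'a::comm_ring_1)"
proof -
  have "(\<Sum>k\<in>UNIV. axis i 1 $ k * g k) = (\<Sum>k\<in>UNIV. if k = i then g k else 0)"
    by (rule sum.cong) (simp_all add: axis_def)
  then show ?thesis by simp
qed

lemma omega_axis_left:
  "omega (axis i 1, 0) z = snd z $ i" "omega (0, axis i 1) z = - fst z $ i"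
  by (simp_all add: omega_def sum_axis_mult sum_negf)

lemma omega_axis_right:
  "omega z (axis i 1, 0) = - snd z $ i" "omega z (0, axis i 1) = fst z $ i"
  using omega_axis_left[of i z] omega_swap[of z] by simp_all

lemma fst_hmul: "fst (hmul g h) = wadd (fst g) (fst h)"
  by (simp add: hmul_def)

definition hinv :: "('n::finite) heis \<Rightarrow> 'n heis" where
  "hinv g = (wscale (-1) (fst g), - snd g)"

lemma hmul_hinv_left: "hmul (hinv g) g = hunit"
  and hmul_hinv_right: "hmul g (hinv g) = hunit"
proof -
  have "omega (wscale (-1) (fst g)) (fst g) = 0" "omega (fst g) (wscale (-1) (fst g)) = 0"
    by (simp_all add: omega_wscale_left omega_wscale_right omega_self)
  then show "hmul (hinv g) g = hunit" "hmul g (hinv g) = hunit"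
    by (simp_all add: hmul_def hinv_def hunit_def wzero_def wadd_def)
qed

text \<open>i0 is an arbitrary fixed index; sform lives on the symplectic plane of the
  i0-th coordinates.\<close>
definition i0 :: "'n::finite" where
  "i0 = undefined"

definition sform :: "complex \<Rightarrow> ('n::finite) wsp \<Rightarrow> 'n wsp \<Rightarrow> complex" where
  "sform \<mu> w z = \<mu> / 2 * (fst w $ i0 * snd z $ i0 + snd w $ i0 * fst z $ i0)"

definition bform :: "complex \<Rightarrow> ('n::finite) wsp \<Rightarrow> 'n wsp \<Rightarrow> complex" where
  "bform \<mu> w z = omega w z / 2 + sform \<mu> w z"

definition qform :: "complex \<Rightarrow> ('n::finite) heis \<Rightarrow> complex" where
  "qform \<mu> g = snd g + sform \<mu> (fst g) (fst g) / 2"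

lemma sform_swap: "sform \<mu> z w = sform \<mu> w z"
  by (simp add: sform_def algebra_simps)

lemma bform_wadd_left: "bform \<mu> (wadd a b) c = bform \<mu> a c + bform \<mu> b c"
  and bform_wadd_right: "bform \<mu> c (wadd a b) = bform \<mu> c a + bform \<mu> c b"
  and bform_wscale_left: "bform \<mu> (wscale k a) b = k * bform \<mu> a b"
  and bform_wscale_right: "bform \<mu> a (wscale k b) = k * bform \<mu> a b"
  by (simp_all add: bform_def sform_def omega_wadd_left omega_wadd_right omega_wscale_left
      omega_wscale_right algebra_simps)

lemma bform_wzero_left [simp]: "bform \<mu> wzero a = 0"
  and bform_wzero_right [simp]: "bform \<mu> a wzero = 0"
  by (simp_all add: bform_def sform_def)

lemma bform_antisym: "bform \<mu> w z - bform \<mu> z w = omega w z"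
  by (simp add: bform_def omega_swap[of z] sform_swap[of \<mu> z])

lemma bform_sym: "bform \<mu> w z + bform \<mu> z w = 2 * sform \<mu> w z"
  by (simp add: bform_def omega_swap[of z] sform_swap[of \<mu> z])

lemma qform_hmul: "qform \<mu> (hmul g h) = qform \<mu> g + qform \<mu> h + bform \<mu> (fst g) (fst h)"
  by (simp add: qform_def hmul_def bform_def sform_def field_simps)

lemma bform_nondegenerate:
  assumes "\<mu>^2 \<noteq> 1" and "\<And>w. bform \<mu> w z = 0"
  shows "z = wzero"
proof (rule wsp_eqI)
  have "\<mu> \<noteq> 1" "\<mu> \<noteq> -1" using assms(1) by auto
  fix i
  have "(1 + (if i = i0 then \<mu> else 0)) * snd z $ i = 0"
    using assms(2)[of "(axis i 1, 0)"] by (auto simp: bform_def sform_def omega_axis_left field_simps)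
  moreover have "((if i = i0 then \<mu> else 0) - 1) * fst z $ i = 0"
    using assms(2)[of "(0, axis i 1)"] by (auto simp: bform_def sform_def omega_axis_left field_simps)
  ultimately show "fst z $ i = fst wzero $ i" "snd z $ i = snd wzero $ i"
    using \<open>\<mu> \<noteq> 1\<close> \<open>\<mu> \<noteq> -1\<close> by (auto split: if_splits simp: add_eq_0_iff)
qed

lemma sform_radical_iff:
  assumes "\<mu> \<noteq> 0"
  shows "(\<forall>z. sform \<mu> r z = 0) \<longleftrightarrow> fst r $ i0 = 0 \<and> snd r $ i0 = 0"
proof
  assume "\<forall>z. sform \<mu> r z = 0"
  from this[rule_format, of "(axis i0 1, 0)"] this[rule_format, of "(0, axis i0 1)"]
  show "fst r $ i0 = 0 \<and> snd r $ i0 = 0" using assms by (simp add: sform_def)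
qed (simp add: sform_def)

lemma polyfn_heis_coords:
  "polyfn heis_coords (\<lambda>g. fst (fst g) $ i)" "polyfn heis_coords (\<lambda>g. snd (fst g) $ i)"
  "polyfn heis_coords snd"
  by (auto intro: polyfn.coord simp: heis_coords_def)

lemma polyfn_omega: "polyfn heis_coords (\<lambda>g. omega (fst g) z)"
  unfolding omega_def
  by (intro polyfn_sum polyfn_diff polyfn.mult polyfn.const polyfn_heis_coords) simp

lemma polyfn_bform: "polyfn heis_coords (\<lambda>g. bform \<mu> (fst g) z)"
  unfolding bform_def sform_def
  by (intro polyfn.add polyfn.mult polyfn.const polyfn_divide_const polyfn_omega polyfn_heis_coords)

lemma polyfn_qform: "polyfn heis_coords (qform \<mu>)"
  unfolding qform_def sform_def
  by (intro polyfn.add polyfn.mult polyfn.const polyfn_divide_const polyfn_heis_coords)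

lemma quadratic_modulus_eq:
  fixes a b c d k m1 m2 :: complex
  assumes "a * d - b * c = k" "a * b = 0" "c * d = 0" "m2 * (a * d + b * c) = k * m1" "k \<noteq> 0"
  shows "m1^2 = m2^2"
proof -
  have "(a * d + b * c)^2 = (a * d - b * c)^2 + 4 * (a * b) * (c * d)"
    by (simp add: power2_eq_square algebra_simps)
  then have "(a * d + b * c)^2 = k^2" using assms(1-3) by simp
  moreover have "(m2 * (a * d + b * c))^2 = (k * m1)^2" using assms(4) by simp
  ultimately show ?thesis using assms(5) by (simp add: power_mult_distrib)
qed

text \<open>A substitution rescaling both omega and sform must preserve the radical of sform, hence
  the symplectic plane of the i0-coordinates, on which the two forms have determinant ratio
  -mu^2.\<close>
lemma sform_similarity_imp_sq_eq:
  fixes \<pi> :: "('n::finite) wsp \<Rightarrow> 'n wsp"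
  assumes "surj \<pi>" "\<kappa> \<noteq> 0" "\<mu>1 \<noteq> 0" "\<mu>2 \<noteq> 0"
    and omega: "\<And>w z. omega (\<pi> w) (\<pi> z) = \<kappa> * omega w z"
    and sform: "\<And>w z. sform \<mu>2 (\<pi> w) (\<pi> z) = \<kappa> * sform \<mu>1 w z"
  shows "\<mu>1^2 = \<mu>2^2"
proof -
  define p where "p = \<pi> (axis i0 1, 0)"
  define q where "q = \<pi> (0, axis i0 1)"
  have orth: "omega p r = 0 \<and> omega q r = 0" if "fst r $ i0 = 0" "snd r $ i0 = 0" for r
  proof -
    obtain r' where r': "r = \<pi> r'" using \<open>surj \<pi>\<close> by (metis surjD)
    have "\<forall>z. sform \<mu>2 r (\<pi> z) = 0" using sform_radical_iff[OF assms(4)] that by blast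
    then have "\<forall>z. sform \<mu>1 r' z = 0" using sform r' \<open>\<kappa> \<noteq> 0\<close> by simp
    then have "fst r' $ i0 = 0" "snd r' $ i0 = 0" using sform_radical_iff[OF assms(3)] by blast+
    then show ?thesis using omega r' by (simp add: p_def q_def omega_axis_left)
  qed
  have off_plane: "fst p $ i = 0 \<and> snd p $ i = 0 \<and> fst q $ i = 0 \<and> snd q $ i = 0" if "i \<noteq> i0" for i
    using orth[of "(axis i 1, 0)"] orth[of "(0, axis i 1)"] that
    by (simp add: omega_axis_right)
  have "omega p q = (\<Sum>i\<in>{i0}. fst p $ i * snd q $ i - snd p $ i * fst q $ i)"
    unfolding omega_def by (rule sum.mono_neutral_right) (auto simp: off_plane)
  then have "fst p $ i0 * snd q $ i0 - snd p $ i0 * fst q $ i0 = \<kappa>"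
    using omega[of "(axis i0 1, 0)" "(0, axis i0 1)"] by (simp add: p_def q_def omega_axis_left)
  moreover have "fst p $ i0 * snd p $ i0 = 0" "fst q $ i0 * snd q $ i0 = 0"
    using sform[of "(axis i0 1, 0)" "(axis i0 1, 0)"] sform[of "(0, axis i0 1)" "(0, axis i0 1)"] assms(4)
    by (simp_all add: p_def q_def sform_def)
  moreover have "\<mu>2 / 2 * (fst p $ i0 * snd q $ i0 + snd p $ i0 * fst q $ i0) = \<kappa> * (\<mu>1 / 2)"
    using sform[of "(axis i0 1, 0)" "(0, axis i0 1)"] by (simp add: p_def q_def sform_def)
  ultimately have "(\<mu>1 / 2)^2 = (\<mu>2 / 2)^2"
    using quadratic_modulus_eq \<open>\<kappa> \<noteq> 0\<close> by blast
  then show ?thesis by (simp add: power_divide)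
qed

section \<open>The representations\<close>

datatype 'n idx = Z0 | X 'n | Y 'n | Zc

lemma UNIV_idx: "(UNIV :: 'n idx set) = {Z0, Zc} \<union> range X \<union> range Y"
  by (auto intro: idx.exhaust)

instance idx :: (finite) finite
  by standard (simp add: UNIV_idx)

lemma card_idx: "CARD(('n::finite) idx) = 2 * CARD('n) + 2"
proof -
  have "CARD('n idx) = card ({Z0, Zc} \<union> range (X :: 'n \<Rightarrow> 'n idx)) + card (range (Y :: 'n \<Rightarrow> 'n idx))"
    unfolding UNIV_idx by (rule card_Un_disjoint) auto
  also have "card ({Z0, Zc} \<union> range (X :: 'n \<Rightarrow> 'n idx)) = card {Z0, Zc :: 'n idx} + card (range (X :: 'n \<Rightarrow> 'n idx))"
    by (rule card_Un_disjoint) auto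
  finally show ?thesis by (simp add: card_image inj_def)
qed

locale adapted_coords =
  fixes f :: "'v::finite \<Rightarrow> 'n::finite idx"
  assumes bij_f: "bij f"
begin

definition coord :: "complex^'v \<Rightarrow> 'n idx \<Rightarrow> complex" where
  "coord v j = v $ inv f j"

definition of_coords :: "('n idx \<Rightarrow> complex) \<Rightarrow> complex^'v" where
  "of_coords c = (\<chi> k. c (f k))"

lemma coord_of_coords [simp]: "coord (of_coords c) j = c j"
  using bij_f by (simp add: coord_def of_coords_def bij_def surj_f_inv_f)

lemma coord_eqI: "(\<And>j. coord u j = coord v j) \<Longrightarrow> u = v"
  using bij_f by (simp add: coord_def vec_eq_iff bij_def) (metis inv_f_f)

lemma coord_add [simp]: "coord (u + v) j = coord u j + coord v j"
  and coord_diff [simp]: "coord (u - v) j = coord u j - coord v j"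
  and coord_smult [simp]: "coord (c *s v) j = c * coord v j"
  and coord_zero [simp]: "coord 0 j = 0"
  by (simp_all add: coord_def)

lemma component_eq_coord: "v $ k = coord v (f k)"
  using bij_f by (simp add: coord_def bij_def)

lemma nonzero_if_coord_nonzero: "coord v j \<noteq> 0 \<Longrightarrow> v \<noteq> 0"
  by auto

lemma hom_poly_coord: "hom_poly (\<lambda>v. coord v j)"
  unfolding coord_def by (rule hom_poly_component)

definition wpart :: "complex^'v \<Rightarrow> 'n wsp" where
  "wpart v = ((\<chi> i. coord v (X i)), (\<chi> i. coord v (Y i)))"

definition wvec :: "'n wsp \<Rightarrow> complex^'v" where
  "wvec w = of_coords (\<lambda>j. case j of X i \<Rightarrow> fst w $ i | Y i \<Rightarrow> snd w $ i | _ \<Rightarrow> 0)"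

definition e0 :: "complex^'v" where
  "e0 = of_coords (\<lambda>j. if j = Z0 then 1 else 0)"

definition ec :: "complex^'v" where
  "ec = of_coords (\<lambda>j. if j = Zc then 1 else 0)"

lemma fst_wpart [simp]: "fst (wpart v) $ i = coord v (X i)"
  and snd_wpart [simp]: "snd (wpart v) $ i = coord v (Y i)"
  by (simp_all add: wpart_def)

lemma coord_wvec [simp]:
  "coord (wvec w) Z0 = 0" "coord (wvec w) (X i) = fst w $ i"
  "coord (wvec w) (Y i) = snd w $ i" "coord (wvec w) Zc = 0"
  by (simp_all add: wvec_def)

lemma coord_e0 [simp]: "coord e0 Z0 = 1" "coord e0 (X i) = 0" "coord e0 (Y i) = 0" "coord e0 Zc = 0"
  and coord_ec [simp]: "coord ec Z0 = 0" "coord ec (X i) = 0" "coord ec (Y i) = 0" "coord ec Zc = 1"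
  by (simp_all add: e0_def ec_def)

lemma wpart_add: "wpart (u + v) = wadd (wpart u) (wpart v)"
  and wpart_smult: "wpart (c *s v) = wscale c (wpart v)"
  by (auto intro: wsp_eqI)

lemma wpart_wvec [simp]: "wpart (wvec w) = w"
  and wpart_e0 [simp]: "wpart e0 = wzero"
  and wpart_ec [simp]: "wpart ec = wzero"
  by (auto intro: wsp_eqI)

lemma wvec_wzero [simp]: "wvec wzero = 0"
  by (rule coord_eqI, case_tac j) simp_all

lemma coord_decomposition: "v = coord v Z0 *s e0 + wvec (wpart v) + coord v Zc *s ec"
  by (rule coord_eqI, case_tac j) simp_all

lemma ec_nonzero: "ec \<noteq> 0"
  by (metis coord_ec(4) coord_zero zero_neq_one)

lemma ec_eq_axis: "ec = axis (inv f Zc) 1"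
  by (simp add: ec_def of_coords_def axis_def vec_eq_iff bij_inv_eq_iff[OF bij_f])

definition rep :: "complex \<Rightarrow> 'n heis \<Rightarrow> complex^'v \<Rightarrow> complex^'v" where
  "rep \<mu> g v = v + coord v Z0 *s (wvec (fst g) + qform \<mu> g *s ec) + bform \<mu> (fst g) (wpart v) *s ec"

lemma coord_rep [simp]:
  "coord (rep \<mu> g v) Z0 = coord v Z0"
  "coord (rep \<mu> g v) (X i) = coord v (X i) + coord v Z0 * fst (fst g) $ i"
  "coord (rep \<mu> g v) (Y i) = coord v (Y i) + coord v Z0 * snd (fst g) $ i"
  "coord (rep \<mu> g v) Zc = coord v Zc + coord v Z0 * qform \<mu> g + bform \<mu> (fst g) (wpart v)"
  by (simp_all add: rep_def)

lemma wpart_rep: "wpart (rep \<mu> g v) = wadd (wpart v) (wscale (coord v Z0) (fst g))"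
  by (auto intro: wsp_eqI)

lemma rep_add: "rep \<mu> g (u + v) = rep \<mu> g u + rep \<mu> g v"
  by (rule coord_eqI, case_tac j) (simp_all add: wpart_add bform_wadd_right algebra_simps)

lemma rep_smult: "rep \<mu> g (c *s v) = c *s rep \<mu> g v"
  by (rule coord_eqI, case_tac j) (simp_all add: wpart_smult bform_wscale_right algebra_simps)

lemma linear_rep: "Vector_Spaces.linear (*s) (*s) (rep \<mu> g)"
  by (simp add: Vector_Spaces.linear_iff vec.vector_space_axioms rep_add rep_smult)

lemma rep_hunit [simp]: "rep \<mu> hunit v = v"
  by (rule coord_eqI, case_tac j) (simp_all add: hunit_def qform_def sform_def)

lemma rep_hmul: "rep \<mu> (hmul g h) v = rep \<mu> g (rep \<mu> h v)"
  by (rule coord_eqI, case_tac j)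
    (simp_all add: wpart_rep qform_hmul fst_hmul bform_wadd_left bform_wadd_right
      bform_wscale_right algebra_simps)

lemma rep_hinv_left [simp]: "rep \<mu> (hinv g) (rep \<mu> g v) = v"
  using rep_hmul[of \<mu> "hinv g" g v] by (simp add: hmul_hinv_left)

lemma rep_hinv_right [simp]: "rep \<mu> g (rep \<mu> (hinv g) v) = v"
  using rep_hmul[of \<mu> g "hinv g" v] by (simp add: hmul_hinv_right)

lemma rep_zero [simp]: "rep \<mu> g 0 = 0"
  using rep_smult[of \<mu> g 0 0] by simp

lemma rep_nonzero: "v \<noteq> 0 \<Longrightarrow> rep \<mu> g v \<noteq> 0"
  by (metis rep_hinv_left rep_zero)

lemma rep_e0: "rep \<mu> g e0 = e0 + wvec (fst g) + qform \<mu> g *s ec"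
  by (rule coord_eqI, case_tac j) simp_all

lemma rep_ec [simp]: "rep \<mu> g ec = ec"
  by (rule coord_eqI, case_tac j) simp_all

lemma rep_boundary: "coord v Z0 = 0 \<Longrightarrow> rep \<mu> g v = v + bform \<mu> (fst g) (wpart v) *s ec"
  by (simp add: rep_def)

lemma rep_center: "rep \<mu> (wzero, s) v = v + (s * coord v Z0) *s ec"
  by (rule coord_eqI, case_tac j) (simp_all add: qform_def sform_def)

lemma rep_eigenvalue:
  assumes "rep \<mu> g u = k *s u" and "u \<noteq> 0"
  shows "k = 1"
proof (rule ccontr)
  assume "k \<noteq> 1"
  have coord_eq: "coord (rep \<mu> g u) j = k * coord u j" for j
    using assms(1) by simp
  have "coord u Z0 = 0" using coord_eq[of Z0] \<open>k \<noteq> 1\<close> by simp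
  moreover have "coord u (X i) = 0" "coord u (Y i) = 0" for i
    using coord_eq[of "X i"] coord_eq[of "Y i"] \<open>k \<noteq> 1\<close> \<open>coord u Z0 = 0\<close> by simp_all
  moreover from this have "wpart u = wzero" by (auto intro: wsp_eqI)
  then have "coord u Zc = 0" using coord_eq[of Zc] \<open>k \<noteq> 1\<close> \<open>coord u Z0 = 0\<close> by simp
  ultimately have "u = 0" by (intro coord_eqI, case_tac j) simp_all
  with assms(2) show False by simp
qed

lemma fixed_vector_in_line_ec:
  assumes "\<mu>^2 \<noteq> 1" and fixed: "\<And>g. rep \<mu> g q = q"
  shows "q = coord q Zc *s ec"
proof -
  have "coord q Z0 = 0"
    using arg_cong[OF fixed[of "((axis i0 1, 0), 0)"], of "\<lambda>x. coord x (X i0)"] by simp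
  moreover have "bform \<mu> w (wpart q) = 0" for w
    using arg_cong[OF fixed[of "(w, 0)"], of "\<lambda>x. coord x Zc"] \<open>coord q Z0 = 0\<close> by simp
  then have "wpart q = wzero" using bform_nondegenerate[OF assms(1)] by blast
  ultimately show ?thesis using coord_decomposition[of q] by simp
qed

lemma polyfn_rep_component: "polyfn heis_coords (\<lambda>g. rep \<mu> g v $ k)"
proof -
  have "polyfn heis_coords (\<lambda>g. coord (rep \<mu> g v) j)" for j
    by (cases j) (simp_all, (intro polyfn.add polyfn.mult polyfn.const polyfn_heis_coords
        polyfn_qform polyfn_bform)+)
  then show ?thesis by (simp add: component_eq_coord)
qed

section \<open>The actions on P(V)\<close>

definition hact :: "complex \<Rightarrow> ('n, 'v) haction" where
  "hact \<mu> g x = rep \<mu> g ` x"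

lemma hact_line: "hact \<mu> g (line v) = line (rep \<mu> g v)"
  unfolding hact_def by (rule line_image) (simp add: rep_smult)

lemma hact_hmul: "hact \<mu> (hmul g h) S = hact \<mu> g (hact \<mu> h S)"
  by (simp add: hact_def image_image rep_hmul)

lemma hact_hinv: "hact \<mu> (hinv g) (hact \<mu> g S) = S"
  by (simp add: hact_def image_image)

lemma invertible_matrix_rep: "invertible (matrix (rep \<mu> g))"
proof -
  have "matrix (rep \<mu> g) ** matrix (rep \<mu> h) = matrix (rep \<mu> (hmul g h))" for g h
    using matrix_compose_gen[OF linear_rep[of \<mu> h] linear_rep[of \<mu> g]]
    by (simp add: comp_def rep_hmul[symmetric])
  moreover have "matrix (rep \<mu> hunit) = mat 1"
    by (metis matrix_id_mat_1 eq_id_iff rep_hunit)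
  ultimately show ?thesis
    unfolding invertible_def
    by (metis hmul_hinv_left hmul_hinv_right)
qed

lemma alg_action_hact: "alg_action (hact \<mu>)"
  unfolding alg_action_def
proof (intro conjI allI ballI impI exI[of _ "\<lambda>g. matrix (rep \<mu> g)"])
  show "polyfn heis_coords (\<lambda>g. matrix (rep \<mu> g) $ i $ j)" for i j
    by (simp add: matrix_def polyfn_rep_component)
  show "hact \<mu> g (line v) = line (matrix (rep \<mu> g) *v v)" for g v
    by (simp add: matrix_works[OF linear_rep] hact_line)
qed (simp_all add: invertible_matrix_rep hact_def image_image rep_hmul)

definition chart :: "(complex^'v) set set" where
  "chart = {line v | v. coord v Z0 \<noteq> 0}"

lemma line_in_chart_iff: "line v \<in> chart \<longleftrightarrow> coord v Z0 \<noteq> 0"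
proof
  assume "line v \<in> chart"
  then obtain u where u: "line v = line u" "coord u Z0 \<noteq> 0" by (auto simp: chart_def)
  then have "u \<noteq> 0" using nonzero_if_coord_nonzero by blast
  with u obtain c where "c \<noteq> 0" "v = c *s u" using line_eq_iff by blast
  with u show "coord v Z0 \<noteq> 0" by simp
qed (unfold chart_def, blast)

lemma chart_subset_proj_space: "chart \<subseteq> proj_space"
  unfolding chart_def proj_space_def using nonzero_if_coord_nonzero by blast

lemma boundary_eq_zero_locus: "proj_space - chart = zero_locus {\<lambda>v. coord v Z0}"
proof (intro set_eqI iffI)
  fix x assume "x \<in> proj_space - chart"
  then obtain v where "x = line v" "v \<noteq> 0" "line v \<notin> chart" by (auto simp: proj_space_def)
  then show "x \<in> zero_locus {\<lambda>v. coord v Z0}"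
    unfolding zero_locus_def line_in_chart_iff by blast
next
  fix x assume "x \<in> zero_locus {\<lambda>v. coord v Z0}"
  then obtain v where "x = line v" "v \<noteq> 0" "coord v Z0 = 0" by (auto simp: zero_locus_def)
  then show "x \<in> proj_space - chart"
    using line_in_chart_iff line_in_proj_space by blast
qed

lemma zopen_chart: "zopen chart"
  unfolding zopen_def boundary_eq_zero_locus zclosed_iff_zero_locus
  by (intro conjI chart_subset_proj_space exI[of _ "{\<lambda>v. coord v Z0}"]) (simp_all add: hom_poly_coord)

text \<open>Every boundary point is a limit of chart points along the direction e0.\<close>
lemma zclosed_superset_chart:
  assumes C: "zclosed C" "chart \<subseteq> C" shows "proj_space \<subseteq> C"
proof
  fix x :: "(complex^'v) set" assume "x \<in> proj_space"
  then obtain u where u: "u \<noteq> 0" "x = line u" by (auto simp: proj_space_def)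
  show "x \<in> C"
  proof (cases "coord u Z0 = 0")
    case True
    have "u + e *s e0 \<noteq> 0 \<and> line (u + e *s e0) \<in> C" if "e \<noteq> 0" for e
    proof -
      have "coord (u + e *s e0) Z0 \<noteq> 0" using that True by simp
      then show ?thesis using C(2) line_in_chart_iff nonzero_if_coord_nonzero by blast
    qed
    then show ?thesis using zclosed_line_limit[OF C(1) u(1)] u(2) by blast
  qed (use C(2) u line_in_chart_iff in blast)
qed

lemma zdense_chart: "zdense chart"
  unfolding zdense_def
  using zclosure_unique[OF zclosed_proj_space chart_subset_proj_space zclosed_superset_chart] .

lemma orbit_hact_e0: "orbit (hact \<mu>) (line e0) = chart"
proof
  show "orbit (hact \<mu>) (line e0) \<subseteq> chart"
    unfolding orbit_def hact_line by (auto simp: line_in_chart_iff)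
  show "chart \<subseteq> orbit (hact \<mu>) (line e0)"
  proof
    fix x assume "x \<in> chart"
    then obtain v where v: "x = line v" "coord v Z0 \<noteq> 0" by (auto simp: chart_def)
    define w where "w = wscale (1 / coord v Z0) (wpart v)"
    define g where "g = (w, coord v Zc / coord v Z0 - sform \<mu> w w / 2)"
    have "rep \<mu> g e0 = (1 / coord v Z0) *s v"
      using v(2) by (intro coord_eqI, case_tac j) (simp_all add: rep_e0 g_def w_def qform_def)
    then have "hact \<mu> g (line e0) = x"
      using v by (simp add: hact_line line_smult)
    then show "x \<in> orbit (hact \<mu>) (line e0)" by (auto simp: orbit_def)
  qed
qed

lemma orbit_hact_chart:
  assumes "x \<in> chart" shows "orbit (hact \<mu>) x = chart"
proof -
  from assms obtain h where h: "x = hact \<mu> h (line e0)"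
    unfolding orbit_hact_e0[of \<mu>, symmetric] orbit_def by blast
  have "hact \<mu> g (line e0) = hact \<mu> (hmul g (hinv h)) x" for g
    by (simp add: h hact_hmul hact_hinv)
  then have "orbit (hact \<mu>) x = orbit (hact \<mu>) (line e0)"
    unfolding orbit_def h by (auto simp: hact_hmul[symmetric])
  then show ?thesis using orbit_hact_e0 by simp
qed

lemma open_orbit_in_chart:
  assumes x0: "x0 \<in> proj_space" and "zopen (orbit (hact \<mu>) x0)"
  shows "x0 \<in> chart"
proof (rule ccontr)
  assume "x0 \<notin> chart"
  from x0 obtain v where v: "x0 = line v" "v \<noteq> 0" by (auto simp: proj_space_def)
  with \<open>x0 \<notin> chart\<close> have "orbit (hact \<mu>) x0 \<inter> chart = {}"
    by (auto simp: orbit_def hact_line line_in_chart_iff)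
  then have "chart \<subseteq> proj_space - orbit (hact \<mu>) x0"
    using chart_subset_proj_space by blast
  moreover have "zclosed (proj_space - orbit (hact \<mu>) x0)"
    using \<open>zopen (orbit (hact \<mu>) x0)\<close> by (simp add: zopen_def)
  ultimately have "proj_space \<subseteq> proj_space - orbit (hact \<mu>) x0"
    using zclosed_superset_chart by blast
  moreover have "x0 \<in> orbit (hact \<mu>) x0"
    unfolding orbit_def by (rule range_eqI[of _ _ hunit]) (simp add: hact_def)
  ultimately show False using x0 by blast
qed

lemma stab_trivial_hact:
  assumes "x \<in> chart" shows "stab_trivial (hact \<mu>) x"
  unfolding stab_trivial_def
proof (intro allI impI)
  fix g assume fix_x: "hact \<mu> g x = x"
  obtain v where v: "x = line v" "coord v Z0 \<noteq> 0"
    using assms by (auto simp: chart_def)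
  then obtain c where c: "rep \<mu> g v = c *s v"
    using fix_x line_eq_iff nonzero_if_coord_nonzero by (metis hact_line)
  from arg_cong[OF c, of "\<lambda>u. coord u Z0"] v have "c = 1" by simp
  then have "fst g = wzero"
    using arg_cong[OF c, of "\<lambda>u. coord u (X i)" for i] arg_cong[OF c, of "\<lambda>u. coord u (Y i)" for i] v(2)
    by (auto intro: wsp_eqI)
  moreover from this have "snd g = 0"
    using arg_cong[OF c, of "\<lambda>u. coord u Zc"] v(2) \<open>c = 1\<close> by (simp add: qform_def sform_def)
  ultimately show "g = hunit" by (simp add: hunit_def prod_eq_iff)
qed

lemma H_structure_hact: "H_structure (hact \<mu>)"
  unfolding H_structure_def
proof (intro conjI exI bexI)
  show "alg_action (hact \<mu>)" by (rule alg_action_hact)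
  have "line e0 \<in> chart" by (simp add: line_in_chart_iff)
  then show "chart \<noteq> {}" and "line e0 \<in> proj_space"
    using chart_subset_proj_space by auto
  show "zopen chart" "\<forall>x\<in>chart. stab_trivial (hact \<mu>) x"
    by (simp_all add: zopen_chart stab_trivial_hact)
  show "zopen (orbit (hact \<mu>) (line e0))" "zdense (orbit (hact \<mu>) (line e0))"
    by (simp_all add: orbit_hact_e0 zopen_chart zdense_chart)
qed

lemma T_fixes_boundary_hact: "T_fixes_boundary (hact \<mu>)"
  unfolding T_fixes_boundary_def
proof (intro ballI impI)
  fix x0 x assume "x0 \<in> proj_space" "zopen (orbit (hact \<mu>) x0)"
    and x: "x \<in> proj_space - orbit (hact \<mu>) x0"
  then have "x \<in> proj_space - chart" using open_orbit_in_chart orbit_hact_chart by metis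
  then obtain v where "x = line v" "coord v Z0 = 0"
    by (auto simp: boundary_eq_zero_locus zero_locus_def)
  moreover from this(2) have "rep \<mu> hT v = v"
    by (intro coord_eqI, case_tac j) (simp_all add: hT_def)
  ultimately show "hact \<mu> hT x = x" by (simp add: hact_line)
qed

lemma center_orbit:
  assumes "coord v Z0 \<noteq> 0"
  shows "range (\<lambda>s. hact \<mu> (wzero, s) (line v)) = range (\<lambda>s. line (v + s *s ec))"
proof -
  have "surj (\<lambda>s. s * coord v Z0)"
    by (rule surjI[of _ "\<lambda>s. s / coord v Z0"]) (simp add: assms)
  moreover have "range (\<lambda>s. hact \<mu> (wzero, s) (line v)) =
      (\<lambda>s. line (v + s *s ec)) ` range (\<lambda>s. s * coord v Z0)"
    by (simp add: hact_line rep_center image_image)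
  ultimately show ?thesis by simp
qed

lemma center_orbit_boundary:
  assumes "coord v Z0 \<noteq> 0"
  shows "zclosure (range (\<lambda>s. line (v + s *s ec))) - range (\<lambda>s. line (v + s *s ec)) = {line ec}"
proof -
  have "v $ inv f Z0 \<noteq> 0" using assms by (simp add: coord_def)
  moreover have "inv f Z0 \<noteq> inv f Zc" using bij_f by (simp add: bij_inv_eq_iff bij_is_surj surj_f_inv_f)
  ultimately show ?thesis
    unfolding ec_eq_axis
    using zclosure_affine_line axis_notin_affine_line by fastforce
qed

definition quot_coords :: "complex^'v \<Rightarrow> complex \<times> 'n wsp" where
  "quot_coords u = (coord u Z0, wpart u)"

lemma clinear_VW_quot_coords: "clinear_VW quot_coords"
  by (simp add: clinear_VW_def quot_coords_def wpart_add wpart_smult)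

lemma surj_quot_coords: "surj quot_coords"
proof (rule surjI)
  fix y :: "complex \<times> 'n wsp"
  show "quot_coords (fst y *s e0 + wvec (snd y)) = y"
    by (simp add: quot_coords_def wpart_add wpart_smult wadd_def wscale_def wzero_def)
qed

lemma quot_coords_eq_zero_iff: "quot_coords u = (0, wzero) \<longleftrightarrow> u \<in> line ec"
proof
  assume "quot_coords u = (0, wzero)"
  then have "u = coord u Zc *s ec"
    using coord_decomposition[of u] by (simp add: quot_coords_def)
  then show "u \<in> line ec" by (auto simp: mem_line)
next
  assume "u \<in> line ec"
  then show "quot_coords u = (0, wzero)"
    by (auto simp: mem_line quot_coords_def wpart_smult)
qed

lemma quot_coords_hact:
  assumes "u \<noteq> 0" and "hact \<mu> g (line u) = line u'"
  shows "\<exists>c. c \<noteq> 0 \<and> quot_coords u' = (c * fst (quot_coords u),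
    wscale c (wadd (snd (quot_coords u)) (wscale (fst (quot_coords u)) (fst g))))"
proof -
  obtain c where "c \<noteq> 0" "u' = c *s rep \<mu> g u"
    using assms line_eq_iff rep_nonzero by (metis hact_line)
  then show ?thesis
    by (auto simp: quot_coords_def wpart_smult wpart_rep)
qed

lemma induced_tautological_hact: "induced_tautological (hact \<mu>)"
  unfolding induced_tautological_def
proof (intro ballI impI)
  fix x0 assume "x0 \<in> proj_space" "zopen (orbit (hact \<mu>) x0)"
  then have "x0 \<in> chart" by (rule open_orbit_in_chart)
  then obtain v where v: "x0 = line v" "coord v Z0 \<noteq> 0" by (auto simp: chart_def)
  have "u \<noteq> 0" if "u \<notin> line ec" for u :: "complex^'v"
    using that line_smult[of 0 ec] by (auto simp: mem_line)
  then show "\<exists>vh. vh \<noteq> 0 \<and>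
      zclosure (range (\<lambda>s. hact \<mu> (wzero, s) x0)) - range (\<lambda>s. hact \<mu> (wzero, s) x0) = {line vh} \<and>
      (\<exists>p L. clinear_VW p \<and> surj p \<and> (\<forall>u. p u = (0, wzero) \<longleftrightarrow> u \<in> line vh) \<and>
        clinear_W L \<and> bij L \<and>
        (\<forall>w t u u'. u \<notin> line vh \<longrightarrow> hact \<mu> (w, t) (line u) = line u' \<longrightarrow>
          (\<exists>c. c \<noteq> 0 \<and> p u' = (c * fst (p u),
            wscale c (wadd (snd (p u)) (wscale (fst (p u)) (L w)))))))"
    using ec_nonzero center_orbit_boundary[OF v(2)] center_orbit[OF v(2)] quot_coords_hact
    by (intro exI[of _ ec] conjI exI[of _ quot_coords] exI[of _ id])
      (auto simp: v clinear_VW_quot_coords surj_quot_coords quot_coords_eq_zero_iff clinear_W_def)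
qed

end

section \<open>Inequivalence\<close>

lemma scalar_if_all_eigenvectors:
  fixes M :: "'a::field^'n \<Rightarrow> 'a^'n"
  assumes add: "\<And>u w. M (u + w) = M u + M w" and smult: "\<And>c u. M (c *s u) = c *s M u"
    and ev: "\<And>u. \<exists>c. M u = c *s u"
  shows "\<exists>l. \<forall>u. M u = l *s u"
proof -
  obtain k :: 'n where True by blast
  obtain l where l: "M (axis k 1) = l *s axis k 1" using ev by blast
  have "M w = l *s w" for w
  proof -
    obtain cw where cw: "M w = cw *s w" using ev by blast
    obtain c where c: "M (axis k 1 + w) = c *s (axis k 1 + w)" using ev by blast
    have E: "c * axis k 1 $ i + c * w $ i = l * axis k 1 $ i + cw * w $ i" for i
      using arg_cong[OF c, of "\<lambda>x. x $ i"] by (simp add: add l cw algebra_simps)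
    show ?thesis
    proof (cases "cw = c")
      case True
      then show ?thesis using E[of k] cw by simp
    next
      case False
      have "w = ((l - c) / (c - cw)) *s axis k 1"
        using E False by (simp add: vec_eq_iff field_simps)
      then show ?thesis by (metis l smult vector_smult_assoc mult.commute)
    qed
  qed
  then show ?thesis by blast
qed

locale hact_equivalence = adapted_coords f for f :: "'v::finite \<Rightarrow> 'n::finite idx" +
  fixes \<mu>1 \<mu>2 :: complex and \<phi> :: "'n heis \<Rightarrow> 'n heis" and P :: "complex^'v^'v"
  assumes surj_\<phi>: "surj \<phi>" and invertible_P: "invertible P" and \<mu>2_sq: "\<mu>2^2 \<noteq> 1"
    and hact_conj: "\<And>g x. x \<in> proj_space \<Longrightarrow>
      (\<lambda>u. P *v u) ` (hact \<mu>1 g x) = hact \<mu>2 (\<phi> g) ((\<lambda>u. P *v u) ` x)"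
begin

definition Pinv :: "complex^'v^'v" where
  "Pinv = matrix_inv P"

lemma P_Pinv [simp]: "P *v (Pinv *v x) = x" and Pinv_P [simp]: "Pinv *v (P *v x) = x"
  using someI_ex[OF invertible_P[unfolded invertible_def]]
  by (simp_all add: Pinv_def matrix_inv_def matrix_vector_mul_assoc)

lemma P_nonzero: "x \<noteq> 0 \<Longrightarrow> P *v x \<noteq> 0"
  by (metis Pinv_P matrix_vector_mult_0_right)

lemma intertwines_projectively:
  assumes "v \<noteq> 0"
  shows "\<exists>c. c \<noteq> 0 \<and> P *v rep \<mu>1 g v = c *s rep \<mu>2 (\<phi> g) (P *v v)"
proof -
  have P_line: "(\<lambda>u. P *v u) ` line x = line (P *v x)" for x
    by (rule line_image) (rule vector_scalar_commute)
  have "line (P *v rep \<mu>1 g v) = line (rep \<mu>2 (\<phi> g) (P *v v))"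
    using hact_conj[OF line_in_proj_space[OF assms], of g] by (simp add: hact_line P_line)
  then show ?thesis
    using line_eq_iff rep_nonzero P_nonzero assms by blast
qed

text \<open>Up to a scalar, which is 1 because the representations are unipotent.\<close>
lemma intertwines: "P *v rep \<mu>1 g v = rep \<mu>2 (\<phi> g) (P *v v)"
proof -
  define M where "M v = Pinv *v rep \<mu>2 (hinv (\<phi> g)) (P *v rep \<mu>1 g v)" for v
  have "\<exists>c. M u = c *s u" for u
  proof (cases "u = 0")
    case False
    then obtain c where "P *v rep \<mu>1 g u = c *s rep \<mu>2 (\<phi> g) (P *v u)"
      using intertwines_projectively by blast
    then show ?thesis by (auto simp: M_def rep_smult vector_scalar_commute)
  qed (simp add: M_def)
  then obtain l where l: "M u = l *s u" for u
    using scalar_if_all_eigenvectors[of M]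
    by (auto simp: M_def rep_add rep_smult matrix_vector_right_distrib vector_scalar_commute)
  have scaled: "P *v rep \<mu>1 g u = l *s rep \<mu>2 (\<phi> g) (P *v u)" for u
    using arg_cong[OF l[of u], of "\<lambda>x. rep \<mu>2 (\<phi> g) (P *v x)"]
    by (simp add: M_def rep_smult vector_scalar_commute)
  have "P *v ec \<noteq> 0" using P_nonzero ec_nonzero by blast
  moreover have eq: "P *v ec = l *s rep \<mu>2 (\<phi> g) (P *v ec)" using scaled[of ec] by simp
  ultimately have "l \<noteq> 0" by auto
  from arg_cong[OF eq, of "\<lambda>x. (1 / l) *s x"]
  have "rep \<mu>2 (\<phi> g) (P *v ec) = (1 / l) *s (P *v ec)"
    using \<open>l \<noteq> 0\<close> by (simp add: vector_smult_assoc)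
  then have "l = 1" using rep_eigenvalue \<open>P *v ec \<noteq> 0\<close> by fastforce
  then show ?thesis using scaled by simp
qed

definition \<beta> :: complex where
  "\<beta> = coord (P *v ec) Zc"

lemma P_ec: "P *v ec = \<beta> *s ec"
proof -
  have "rep \<mu>2 h (P *v ec) = P *v ec" for h
    using surj_\<phi> intertwines[of _ ec] by (metis rep_ec surjD)
  then show ?thesis unfolding \<beta>_def using fixed_vector_in_line_ec[OF \<mu>2_sq] by blast
qed

lemma \<beta>_nonzero: "\<beta> \<noteq> 0"
  using P_ec P_nonzero[OF ec_nonzero] by auto

lemma P_boundary: "coord v Z0 = 0 \<Longrightarrow> coord (P *v v) Z0 = 0"
proof -
  assume v: "coord v Z0 = 0"
  obtain g where g: "\<phi> g = ((axis i0 1, 0), 0)" using surj_\<phi> by (metis surjD)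
  have "rep \<mu>2 ((axis i0 1, 0), 0) (P *v v) = P *v v + (bform \<mu>1 (fst g) (wpart v) * \<beta>) *s ec"
    using intertwines[of g v] v g
    by (simp add: rep_boundary matrix_vector_right_distrib vector_scalar_commute P_ec vector_smult_assoc)
  from arg_cong[OF this, of "\<lambda>x. coord x (X i0)"] show ?thesis by simp
qed

definition c0 :: complex where
  "c0 = coord (P *v e0) Z0"

lemma coord_P_Z0: "coord (P *v u) Z0 = c0 * coord u Z0"
proof -
  have "P *v u = coord u Z0 *s (P *v e0) + P *v (u - coord u Z0 *s e0)"
    by (simp add: vector_scalar_commute[symmetric] matrix_vector_right_distrib[symmetric])
  moreover have "coord (P *v (u - coord u Z0 *s e0)) Z0 = 0" by (rule P_boundary) simp
  ultimately show ?thesis by (simp add: c0_def mult.commute)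
qed

lemma c0_nonzero: "c0 \<noteq> 0"
  using coord_P_Z0[of "Pinv *v e0"] by auto

lemma bform_intertwined:
  assumes "coord v Z0 = 0"
  shows "bform \<mu>2 (fst (\<phi> g)) (wpart (P *v v)) = \<beta> * bform \<mu>1 (fst g) (wpart v)"
proof -
  have "P *v v + (bform \<mu>1 (fst g) (wpart v) * \<beta>) *s ec =
      P *v v + bform \<mu>2 (fst (\<phi> g)) (wpart (P *v v)) *s ec"
    using intertwines[of g v] assms P_boundary[OF assms]
    by (simp add: rep_boundary matrix_vector_right_distrib vector_scalar_commute P_ec vector_smult_assoc)
  from arg_cong[OF this, of "\<lambda>x. coord x Zc"] show ?thesis by (simp add: mult.commute)
qed

definition \<pi> :: "'n wsp \<Rightarrow> 'n wsp" where
  "\<pi> w = wpart (P *v wvec w)"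

lemma \<pi>_fst: "\<pi> (fst g) = wscale c0 (fst (\<phi> g))"
proof -
  have "wpart (P *v rep \<mu>1 g e0) = wpart (rep \<mu>2 (\<phi> g) (P *v e0))"
    by (simp add: intertwines)
  then have "wadd (wpart (P *v e0)) (\<pi> (fst g)) = wadd (wpart (P *v e0)) (wscale c0 (fst (\<phi> g)))"
    by (simp add: rep_e0 \<pi>_def c0_def matrix_vector_right_distrib vector_scalar_commute P_ec
        wpart_add wpart_smult wpart_rep)
  then show ?thesis by (simp add: wadd_def prod_eq_iff)
qed

lemma surj_\<pi>: "surj \<pi>"
proof (rule surjI)
  fix y
  let ?v = "Pinv *v wvec y"
  have "coord ?v Z0 = 0" using coord_P_Z0[of ?v] c0_nonzero by simp
  then have "P *v ?v = P *v wvec (wpart ?v) + coord ?v Zc *s (\<beta> *s ec)"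
    using coord_decomposition[of ?v]
    by (metis P_ec add_0 matrix_vector_right_distrib vector_scalar_commute vector_smult_lzero)
  from arg_cong[OF this, of wpart] show "\<pi> (wpart ?v) = y"
    by (simp add: \<pi>_def wpart_add wpart_smult wadd_def wzero_def)
qed

lemma bform_\<pi>: "bform \<mu>2 (\<pi> w) (\<pi> z) = (c0 * \<beta>) * bform \<mu>1 w z"
proof -
  have "bform \<mu>2 (fst (\<phi> (w, 0))) (\<pi> z) = \<beta> * bform \<mu>1 w z"
    using bform_intertwined[of "wvec z" "(w, 0)"] by (simp add: \<pi>_def)
  moreover have "\<pi> w = wscale c0 (fst (\<phi> (w, 0)))"
    using \<pi>_fst[of "(w, 0)"] by simp
  ultimately show ?thesis by (simp add: bform_wscale_left)
qed

end

lemma equiv_action_refl: "equiv_action \<alpha> \<alpha>"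
  unfolding equiv_action_def
  by (intro exI[of _ id] exI[of _ "mat 1"] conjI allI impI)
    (auto simp: invertible_def intro: exI[of _ "mat 1"])

context adapted_coords
begin

lemma equiv_action_hact_imp_sq_eq:
  assumes "\<mu>1 \<noteq> 0" "\<mu>2 \<noteq> 0" "\<mu>2^2 \<noteq> 1" and "equiv_action (hact \<mu>1) (hact \<mu>2)"
  shows "\<mu>1^2 = \<mu>2^2"
proof -
  obtain \<phi> P where "bij \<phi>" "invertible P" and
    "\<And>g x. x \<in> proj_space \<Longrightarrow> (\<lambda>u. P *v u) ` hact \<mu>1 g x = hact \<mu>2 (\<phi> g) ((\<lambda>u. P *v u) ` x)"
    using assms(4) unfolding equiv_action_def by blast
  then interpret hact_equivalence f \<mu>1 \<mu>2 \<phi> P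
    by unfold_locales (simp_all add: bij_is_surj assms(3))
  have omega_\<pi>: "omega (\<pi> w) (\<pi> z) = (c0 * \<beta>) * omega w z" for w z
  proof -
    have "omega (\<pi> w) (\<pi> z) = bform \<mu>2 (\<pi> w) (\<pi> z) - bform \<mu>2 (\<pi> z) (\<pi> w)"
      by (rule bform_antisym[symmetric])
    also have "\<dots> = (c0 * \<beta>) * (bform \<mu>1 w z - bform \<mu>1 z w)"
      by (simp add: bform_\<pi> right_diff_distrib)
    finally show ?thesis by (simp add: bform_antisym)
  qed
  have sform_\<pi>: "sform \<mu>2 (\<pi> w) (\<pi> z) = (c0 * \<beta>) * sform \<mu>1 w z" for w z
  proof -
    have "2 * sform \<mu>2 (\<pi> w) (\<pi> z) = bform \<mu>2 (\<pi> w) (\<pi> z) + bform \<mu>2 (\<pi> z) (\<pi> w)"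
      by (rule bform_sym[symmetric])
    also have "\<dots> = (c0 * \<beta>) * (bform \<mu>1 w z + bform \<mu>1 z w)"
      by (simp add: bform_\<pi> distrib_left)
    finally show ?thesis by (simp add: bform_sym)
  qed
  show ?thesis
    using sform_similarity_imp_sq_eq[OF surj_\<pi> _ assms(1,2) omega_\<pi> sform_\<pi>] c0_nonzero \<beta>_nonzero
    by simp
qed

lemma hact_inequivalent:
  assumes "k \<noteq> l"
  shows "\<not> equiv_action (hact (of_nat (k + 2))) (hact (of_nat (l + 2)))"
proof
  assume "equiv_action (hact (of_nat (k + 2))) (hact (of_nat (l + 2)))"
  moreover have "(l + 2) ^ 2 \<noteq> (1::nat)" by (simp add: power2_eq_square)
  then have "of_nat (l + 2) ^ 2 \<noteq> (1::complex)"
    by (simp only: of_nat_power [symmetric] of_nat_eq_1_iff not_False_eq_True)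
  moreover have "of_nat (j + 2) \<noteq> (0::complex)" for j by (simp only: of_nat_eq_0_iff)
  ultimately have "of_nat (k + 2) ^ 2 = (of_nat (l + 2) ^ 2 :: complex)"
    by (intro equiv_action_hact_imp_sq_eq)
  then have "(k + 2) ^ 2 = (l + 2) ^ 2" by (simp only: of_nat_power [symmetric] of_nat_eq_iff)
  then have "k + 2 = l + 2" by (rule power_eq_imp_eq_base) simp_all
  with assms show False by simp
qed

lemma infinitely_many_inequivalent_hact:
  "\<exists>S :: ('n, 'v) haction set. infinite S \<and>
     (\<forall>\<alpha>\<in>S. H_structure \<alpha> \<and> T_fixes_boundary \<alpha> \<and> induced_tautological \<alpha>) \<and>
     (\<forall>\<alpha>\<in>S. \<forall>\<beta>\<in>S. \<alpha> \<noteq> \<beta> \<longrightarrow> \<not> equiv_action \<alpha> \<beta>)"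
proof -
  let ?S = "range (\<lambda>k. hact (of_nat (k + 2)))"
  have "inj (\<lambda>k. hact (of_nat (k + 2)))"
  proof (rule injI)
    fix k l assume "hact (of_nat (k + 2)) = hact (of_nat (l + 2))"
    then show "k = l" using hact_inequivalent equiv_action_refl by metis
  qed
  then have "infinite ?S" by (simp add: finite_image_iff)
  moreover have "\<forall>\<alpha>\<in>?S. H_structure \<alpha> \<and> T_fixes_boundary \<alpha> \<and> induced_tautological \<alpha>"
    by (simp add: H_structure_hact T_fixes_boundary_hact induced_tautological_hact)
  moreover have "\<forall>\<alpha>\<in>?S. \<forall>\<beta>\<in>?S. \<alpha> \<noteq> \<beta> \<longrightarrow> \<not> equiv_action \<alpha> \<beta>"
  proof (intro ballI impI)
    fix \<alpha> \<beta> assume "\<alpha> \<in> ?S" "\<beta> \<in> ?S" "\<alpha> \<noteq> \<beta>"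
    then obtain k l where "\<alpha> = hact (of_nat (k + 2))" "\<beta> = hact (of_nat (l + 2))" "k \<noteq> l"
      by blast
    with hact_inequivalent show "\<not> equiv_action \<alpha> \<beta>" by blast
  qed
  ultimately show ?thesis by (intro exI[of _ ?S] conjI)
qed

end

theorem theorem3p12:
  assumes "CARD('v) = 2 * CARD('n) + 2"
  shows "(\<exists>S :: ('n::finite, 'v::finite) haction set. infinite S \<and>
            (\<forall>\<alpha>\<in>S. H_structure \<alpha> \<and> T_fixes_boundary \<alpha> \<and> induced_tautological \<alpha>) \<and>
            (\<forall>\<alpha>\<in>S. \<forall>\<beta>\<in>S. \<alpha> \<noteq> \<beta> \<longrightarrow> \<not> equiv_action \<alpha> \<beta>))
       \<and> (\<exists>S :: ('n::finite, 'v::finite) haction set. infinite S \<and>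
            (\<forall>\<alpha>\<in>S. H_structure \<alpha>) \<and>
            (\<forall>\<alpha>\<in>S. \<forall>\<beta>\<in>S. \<alpha> \<noteq> \<beta> \<longrightarrow> \<not> equiv_action \<alpha> \<beta>))"
proof -
  have "CARD('v) = CARD('n idx)" using assms card_idx[where 'n='n] by simp
  then obtain f :: "'v \<Rightarrow> 'n idx" where "bij f"
    using finite_same_card_bij[OF finite_class.finite_UNIV finite_class.finite_UNIV] by blast
  then interpret adapted_coords f by unfold_locales
  obtain S :: "('n, 'v) haction set" where "infinite S"
    and "\<forall>\<alpha>\<in>S. H_structure \<alpha> \<and> T_fixes_boundary \<alpha> \<and> induced_tautological \<alpha>"
    and "\<forall>\<alpha>\<in>S. \<forall>\<beta>\<in>S. \<alpha> \<noteq> \<beta> \<longrightarrow> \<not> equiv_action \<alpha> \<beta>"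
    using infinitely_many_inequivalent_hact by (elim exE conjE)
  then show ?thesis by (intro conjI exI[of _ S]) simp_all
qed

end
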